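(* Consider graphs of maximum degree $4$ with ports numbered $1,2,3,4$, and the following protocol. For each node $v$ on a fixed shortest path from the source $s$ to the treasure $t$ (of length $D$), other than $t$, the oracle places at $v$ a quantum pebble emitting qubits in state $\psi_i$, where $i$ is the port at $v$ of the next edge of the path and $\psi_1=|0\rangle$, $\psi_2=|1\rangle$, $\psi_3=|+\rangle$, $\psi_4=|-\rangle$ (with $|\pm\rangle=(|0\rangle\pm|1\rangle)/\sqrt2$). At each node the agent measures $n$ emitted qubits in the computational basis $\{|0\rangle,|1\rangle\}$ and $n$ emitted qubits in the sign basis $\{|+\rangle,|-\rangle\}$; if exactly one of the two bases yields the same outcome in all $n$ measurements, the agent takes the port corresponding to that outcome ($0\mapsto1$, $1\mapsto2$, $+\mapsto3$, $-\mapsto4$), and if both bases yield uniform outcome strings the search fails. If $n=O(\log D)$ (measurements in each of the two bases at each node of the shortest path), then the probability that the agent reaches the treasure in $D$ steps is close to $1$ (it tends to $1$ as $D\to\infty$).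
   Context: Anonymous graph: connected simple undirected graph with unlabelled nodes, edges at each node carrying distinct local port numbers. The agent is oblivious (no memory between rounds) and in each round can traverse at most one edge. A quantum pebble is a source placed at a node by an oracle that repeatedly emits qubits, all in the same quantum state, which is unknown to the agent; the agent can obtain arbitrarily many copies and perform projective single-qubit measurements on them. *)

theory Defs
  imports "HOL-Probability.Probability"
begin

text \<open>A graph on vertex type 'v is given by its port function: nbr v p = Some u iff the
  edge at v with local port number p leads to u.\<close>

definition adj :: "('v \<Rightarrow> nat \<Rightarrow> 'v option) \<Rightarrow> 'v \<Rightarrow> 'v \<Rightarrow> bool" where
  "adj nbr u v \<longleftrightarrow> (\<exists>p. nbr u p = Some v)"

definition is_walk :: "('v \<Rightarrow> nat \<Rightarrow> 'v option) \<Rightarrow> 'v list \<Rightarrow> 'v \<Rightarrow> 'v \<Rightarrow> bool" where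
  "is_walk nbr w u v \<longleftrightarrow> w \<noteq> [] \<and> hd w = u \<and> last w = v \<and>
     (\<forall>i. Suc i < length w \<longrightarrow> adj nbr (w ! i) (w ! Suc i))"

definition port_graph4 :: "('v \<Rightarrow> nat \<Rightarrow> 'v option) \<Rightarrow> bool" where
  "port_graph4 nbr \<longleftrightarrow>
     (\<forall>v. \<exists>d\<le>4. \<forall>p. nbr v p \<noteq> None \<longleftrightarrow> 1 \<le> p \<and> p \<le> d) \<and>
     (\<forall>v p q. nbr v p \<noteq> None \<and> nbr v p = nbr v q \<longrightarrow> p = q) \<and>
     (\<forall>v p. nbr v p \<noteq> Some v) \<and>
     (\<forall>u v. adj nbr u v \<longrightarrow> adj nbr v u) \<and>
     (\<forall>u v. \<exists>w. is_walk nbr w u v)"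

definition shortest_path :: "('v \<Rightarrow> nat \<Rightarrow> 'v option) \<Rightarrow> 'v \<Rightarrow> 'v \<Rightarrow> 'v list \<Rightarrow> bool" where
  "shortest_path nbr s t P \<longleftrightarrow> is_walk nbr P s t \<and>
     (\<forall>w. is_walk nbr w s t \<longrightarrow> length P \<le> length w)"

definition port_to :: "('v \<Rightarrow> nat \<Rightarrow> 'v option) \<Rightarrow> 'v \<Rightarrow> 'v \<Rightarrow> nat" where
  "port_to nbr u v = (THE p. nbr u p = Some v)"

type_synonym qubit = "complex \<times> complex"

definition ket0 :: qubit where "ket0 = (1, 0)"
definition ket1 :: qubit where "ket1 = (0, 1)"
definition ketp :: qubit where "ketp = (complex_of_real (1 / sqrt 2), complex_of_real (1 / sqrt 2))"
definition ketm :: qubit where "ketm = (complex_of_real (1 / sqrt 2), - complex_of_real (1 / sqrt 2))"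

definition braket :: "qubit \<Rightarrow> qubit \<Rightarrow> complex" where
  "braket b \<psi> = cnj (fst b) * fst \<psi> + cnj (snd b) * snd \<psi>"

text \<open>Projective measurement of state psi in orthonormal basis (b0, b1);
  outcome False = b0, True = b1; Born rule.\<close>
definition measure_qubit :: "qubit \<times> qubit \<Rightarrow> qubit \<Rightarrow> bool pmf" where
  "measure_qubit B \<psi> = bernoulli_pmf ((cmod (braket (snd B) \<psi>))\<^sup>2)"

definition comp_basis :: "qubit \<times> qubit" where "comp_basis = (ket0, ket1)"
definition sign_basis :: "qubit \<times> qubit" where "sign_basis = (ketp, ketm)"

text \<open>n independent measurements (on n fresh copies).\<close>
primrec repeat_pmf :: "nat \<Rightarrow> 'a pmf \<Rightarrow> 'a list pmf" where
  "repeat_pmf 0 M = return_pmf []"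
| "repeat_pmf (Suc n) M = do { x \<leftarrow> M; xs \<leftarrow> repeat_pmf n M; return_pmf (x # xs) }"

definition psi :: "nat \<Rightarrow> qubit" where
  "psi i = (if i = 1 then ket0 else if i = 2 then ket1 else if i = 3 then ketp else ketm)"

definition pebbles :: "('v \<Rightarrow> nat \<Rightarrow> 'v option) \<Rightarrow> 'v list \<Rightarrow> 'v \<Rightarrow> qubit option" where
  "pebbles nbr P v =
     (if \<exists>i. Suc i < length P \<and> P ! i = v
      then (let i = (THE i. Suc i < length P \<and> P ! i = v)
            in Some (psi (port_to nbr v (P ! Suc i))))
      else None)"

definition uniform :: "bool list \<Rightarrow> bool" where
  "uniform xs \<longleftrightarrow> (\<forall>x\<in>set xs. x = hd xs)"

definition decide :: "bool list \<Rightarrow> bool list \<Rightarrow> nat option" where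
  "decide xs ys =
     (if uniform xs \<and> \<not> uniform ys then Some (if hd xs then 2 else 1)
      else if uniform ys \<and> \<not> uniform xs then Some (if hd ys then 4 else 3)
      else None)"

text \<open>One round of the oblivious agent; None = search failed. At the treasure it stops.\<close>
definition agent_step :: "('v \<Rightarrow> nat \<Rightarrow> 'v option) \<Rightarrow> ('v \<Rightarrow> qubit option) \<Rightarrow> 'v \<Rightarrow> nat
    \<Rightarrow> 'v option \<Rightarrow> 'v option pmf" where
  "agent_step nbr peb t n x =
     (case x of None \<Rightarrow> return_pmf None
      | Some v \<Rightarrow>
         if v = t then return_pmf (Some t)
         else (case peb v of None \<Rightarrow> return_pmf None
               | Some \<psi> \<Rightarrow> do {
                   xs \<leftarrow> repeat_pmf n (measure_qubit comp_basis \<psi>);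
                   ys \<leftarrow> repeat_pmf n (measure_qubit sign_basis \<psi>);
                   return_pmf (case decide xs ys of None \<Rightarrow> None | Some p \<Rightarrow> nbr v p) }))"

primrec agent_run :: "('v \<Rightarrow> nat \<Rightarrow> 'v option) \<Rightarrow> ('v \<Rightarrow> qubit option) \<Rightarrow> 'v \<Rightarrow> 'v \<Rightarrow> nat
    \<Rightarrow> nat \<Rightarrow> 'v option pmf" where
  "agent_run nbr peb s t n 0 = return_pmf (Some s)"
| "agent_run nbr peb s t n (Suc k) = agent_run nbr peb s t n k \<bind> agent_step nbr peb t n"

text \<open>Probability of being at the treasure after D rounds (= of reaching it within D steps).\<close>
definition success_prob :: "('v \<Rightarrow> nat \<Rightarrow> 'v option) \<Rightarrow> 'v \<Rightarrow> 'v \<Rightarrow> 'v list \<Rightarrow> nat \<Rightarrow> real" where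
  "success_prob nbr s t P n =
     pmf (agent_run nbr (pebbles nbr P) s t n (length P - 1)) (Some t)"

end

theory Submission
  imports Defs
begin

text \<open>The state of a pebble on the path is an eigenstate of one of the two bases and unbiased
  for the other. In the first basis all n outcomes agree and name the port; in the second they
  are n fair coin flips, which are all equal only with probability 2/2^n, and only then can the
  agent go astray. A union bound over the D steps bounds the failure probability by 2D/2^n,
  which is at most 2/D once n \<ge> 2 log2 D.\<close>

lemma pmf_repeat_pmf_Cons:
  "pmf (repeat_pmf (Suc n) M) (x # xs) = pmf M x * pmf (repeat_pmf n M) xs"
proof -
  have repeat: "repeat_pmf (Suc n) M = map_pmf (\<lambda>(x, xs). x # xs) (pair_pmf M (repeat_pmf n M))"
    by (simp add: pair_pmf_def map_bind_pmf)
  have "inj (\<lambda>(x :: 'a, xs). x # xs)"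
    by (auto simp: inj_def)
  from pmf_map_inj'[OF this, of "pair_pmf M (repeat_pmf n M)" "(x, xs)"] show ?thesis
    unfolding repeat by (simp add: pmf_pair)
qed

lemma pmf_repeat_pmf_replicate: "pmf (repeat_pmf n M) (replicate n x) = pmf M x ^ n"
  by (induction n) (simp_all del: repeat_pmf.simps(2) add: pmf_repeat_pmf_Cons)

lemma set_repeat_pmf: "set_pmf (repeat_pmf n M) \<subseteq> {xs. length xs = n}"
  by (induction n) auto

lemma repeat_pmf_return_pmf: "repeat_pmf n (return_pmf x) = return_pmf (replicate n x)"
  by (induction n) (simp_all add: bind_return_pmf)

lemma bernoulli_pmf_0: "bernoulli_pmf 0 = return_pmf False"
  by (rule pmf_eqI) (simp split: split_indicator)

lemma bernoulli_pmf_1: "bernoulli_pmf 1 = return_pmf True"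
  by (rule pmf_eqI) (simp split: split_indicator)

lemma uniform_replicate [simp]: "uniform (replicate n x)"
  by (simp add: uniform_def)

lemma uniform_iff_replicate: "uniform xs \<longleftrightarrow> (\<exists>b. xs = replicate (length xs) b)"
proof
  assume "uniform xs"
  then have "replicate (length xs) (hd xs) = xs"
    unfolding uniform_def by (rule replicate_length_same)
  then show "\<exists>b. xs = replicate (length xs) b"
    by (intro exI[of _ "hd xs"]) (rule sym)
next
  assume "\<exists>b. xs = replicate (length xs) b"
  then obtain b where b: "xs = replicate (length xs) b" ..
  show "uniform xs"
    by (subst b) (rule uniform_replicate)
qed

lemma measure_repeat_fair_coin_uniform:
  "measure_pmf.prob (repeat_pmf n (bernoulli_pmf (1/2))) {xs. uniform xs} \<le> 2 / 2 ^ n"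
proof -
  let ?R = "repeat_pmf n (bernoulli_pmf (1/2))"
  have "{xs. uniform xs} \<inter> set_pmf ?R \<subseteq> {replicate n True} \<union> {replicate n False}"
  proof
    fix xs
    assume xs: "xs \<in> {xs. uniform xs} \<inter> set_pmf ?R"
    then obtain b where "xs = replicate (length xs) b"
      by (auto simp only: uniform_iff_replicate)
    moreover have "length xs = n"
      using xs set_repeat_pmf by blast
    ultimately have "xs = replicate n b"
      by metis
    then show "xs \<in> {replicate n True} \<union> {replicate n False}"
      by (cases b) simp_all
  qed
  then have "measure_pmf.prob ?R {xs. uniform xs}
      \<le> measure_pmf.prob ?R ({replicate n True} \<union> {replicate n False})"
    by (subst measure_Int_set_pmf[symmetric]) (rule measure_pmf.finite_measure_mono, auto)
  also have "\<dots> \<le> pmf ?R (replicate n True) + pmf ?R (replicate n False)"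
    by (rule order_trans[OF measure_Un_le]) (simp_all add: measure_pmf_single)
  also have "\<dots> = 2 / 2 ^ n"
    by (simp add: pmf_repeat_pmf_replicate power_one_over)
  finally show ?thesis .
qed

lemma decide_replicate_left:
  "0 < n \<Longrightarrow> \<not> uniform ys \<Longrightarrow> decide (replicate n b) ys = Some (if b then 2 else 1)"
  by (simp add: decide_def)

lemma decide_replicate_right:
  "0 < n \<Longrightarrow> \<not> uniform xs \<Longrightarrow> decide xs (replicate n b) = Some (if b then 4 else 3)"
  by (simp add: decide_def)

lemma cmod_inverse_sqrt2_squared: "(cmod (1 / complex_of_real (sqrt 2)))\<^sup>2 = 1 / 2"
  by (simp add: norm_divide power_divide)

lemma measure_qubit_psi_comp_eigenstate:
  assumes "k \<in> {1, 2}"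
  shows "measure_qubit comp_basis (psi k) = return_pmf (k = 2)"
    and "measure_qubit sign_basis (psi k) = bernoulli_pmf (1/2)"
  using assms
  by (auto simp: measure_qubit_def comp_basis_def sign_basis_def psi_def ket0_def ket1_def
      ketp_def ketm_def braket_def bernoulli_pmf_0 bernoulli_pmf_1 cmod_inverse_sqrt2_squared
      simp flip: of_real_mult)

lemma measure_qubit_psi_sign_eigenstate:
  assumes "k \<in> {3, 4}"
  shows "measure_qubit comp_basis (psi k) = bernoulli_pmf (1/2)"
    and "measure_qubit sign_basis (psi k) = return_pmf (k = 4)"
  using assms
  by (auto simp: measure_qubit_def comp_basis_def sign_basis_def psi_def ket0_def ket1_def
      ketp_def ketm_def braket_def bernoulli_pmf_0 bernoulli_pmf_1 cmod_inverse_sqrt2_squared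
      simp flip: of_real_mult)

lemma agent_step_at_pebble:
  assumes "v \<noteq> t" "peb v = Some \<psi>"
  shows "agent_step nbr peb t n (Some v) =
    repeat_pmf n (measure_qubit comp_basis \<psi>) \<bind> (\<lambda>xs.
      map_pmf (\<lambda>ys. case decide xs ys of None \<Rightarrow> None | Some p \<Rightarrow> nbr v p)
        (repeat_pmf n (measure_qubit sign_basis \<psi>)))"
  using assms by (simp add: agent_step_def map_pmf_def)

lemma agent_step_eq_map_fair_coins:
  assumes "0 < n" "v \<noteq> t" "peb v = Some (psi k)" "nbr v k = Some w" "k \<in> {1, 2, 3, 4}"
  obtains h where "agent_step nbr peb t n (Some v) = map_pmf h (repeat_pmf n (bernoulli_pmf (1/2)))"
    and "\<And>zs. \<not> uniform zs \<Longrightarrow> h zs = Some w"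
proof (cases "k \<in> {1, 2}")
  case True
  with assms(2,3) have "agent_step nbr peb t n (Some v) = map_pmf
      (\<lambda>ys. case decide (replicate n (k = 2)) ys of None \<Rightarrow> None | Some p \<Rightarrow> nbr v p)
      (repeat_pmf n (bernoulli_pmf (1/2)))"
    by (simp add: agent_step_at_pebble measure_qubit_psi_comp_eigenstate
        repeat_pmf_return_pmf bind_return_pmf)
  with that show ?thesis
    using True assms(1,4) by (auto simp: decide_replicate_left)
next
  case False
  with assms(5) have k: "k \<in> {3, 4}"
    by simp
  with assms(2,3) have "agent_step nbr peb t n (Some v) = map_pmf
      (\<lambda>xs. case decide xs (replicate n (k = 4)) of None \<Rightarrow> None | Some p \<Rightarrow> nbr v p)
      (repeat_pmf n (bernoulli_pmf (1/2)))"
    by (simp add: agent_step_at_pebble measure_qubit_psi_sign_eigenstate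
        repeat_pmf_return_pmf map_pmf_def[symmetric])
  with that show ?thesis
    using k assms(1,4) by (auto simp: decide_replicate_right)
qed

lemma pmf_agent_step_ge:
  assumes "v \<noteq> t" "peb v = Some (psi k)" "nbr v k = Some w" "k \<in> {1, 2, 3, 4}"
  shows "1 - 2 / 2 ^ n \<le> pmf (agent_step nbr peb t n (Some v)) (Some w)"
proof (cases "n = 0")
  case True
  then have "1 - 2 / 2 ^ n = (-1 :: real)"
    by simp
  then show ?thesis
    using pmf_nonneg[of "agent_step nbr peb t n (Some v)" "Some w"] by linarith
next
  case False
  then have "0 < n"
    by simp
  let ?R = "repeat_pmf n (bernoulli_pmf (1/2))"
  obtain h where step: "agent_step nbr peb t n (Some v) = map_pmf h ?R"
    and h: "\<And>zs. \<not> uniform zs \<Longrightarrow> h zs = Some w"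
    using agent_step_eq_map_fair_coins[where nbr = nbr and peb = peb and v = v, OF \<open>0 < n\<close> assms]
    by blast
  have "1 - measure_pmf.prob ?R {zs. uniform zs} = measure_pmf.prob ?R (- {zs. uniform zs})"
    using measure_pmf.prob_compl[of "{zs. uniform zs}" ?R] by (simp add: Compl_eq_Diff_UNIV)
  also have "\<dots> \<le> measure_pmf.prob ?R (h -` {Some w})"
    using h by (intro measure_pmf.finite_measure_mono) auto
  finally show ?thesis
    using measure_repeat_fair_coin_uniform[of n] by (simp add: step pmf_map)
qed

lemma is_walk_iff_successively:
  "is_walk nbr w u v \<longleftrightarrow> w \<noteq> [] \<and> hd w = u \<and> last w = v \<and> successively (adj nbr) w"
  by (simp add: is_walk_def successively_conv_nth)

lemma successively_shortcut:
  assumes "successively R xs" "i < j" "j < length xs" "xs ! i = xs ! j"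
  shows "successively R (take i xs @ drop j xs)"
proof -
  have "successively R (take i xs @ drop i xs)" "successively R (take j xs @ drop j xs)"
    using assms(1) by simp_all
  moreover have "hd (drop j xs) = hd (drop i xs)"
    using assms by (simp add: hd_drop_conv_nth)
  ultimately show ?thesis
    using assms unfolding successively_append_iff by auto
qed

lemma shortest_path_distinct:
  assumes "shortest_path nbr s t P"
  shows "distinct P"
proof (rule ccontr)
  assume "\<not> distinct P"
  then obtain i j where ij: "i < j" "j < length P" "P ! i = P ! j"
    by (metis distinct_conv_nth linorder_neqE_nat)
  have walk: "P \<noteq> []" "hd P = s" "last P = t" "successively (adj nbr) P"
    using assms by (simp_all add: shortest_path_def is_walk_iff_successively)
  have "hd (take i P @ drop j P) = s"
  proof (cases "i = 0")
    case True
    then show ?thesis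
      using ij walk by (simp add: hd_drop_conv_nth hd_conv_nth)
  qed (use walk in simp)
  then have "is_walk nbr (take i P @ drop j P) s t"
    using ij walk by (simp add: is_walk_iff_successively successively_shortcut)
  then have "length P \<le> length (take i P @ drop j P)"
    using assms unfolding shortest_path_def by blast
  then show False
    using ij by simp
qed

lemma port_to_eq:
  assumes "port_graph4 nbr" "nbr u p = Some v"
  shows "port_to nbr u v = p"
  unfolding port_to_def
proof (rule the_equality)
  show "\<And>q. nbr u q = Some v \<Longrightarrow> q = p"
    using assms unfolding port_graph4_def by (metis option.distinct(1))
qed (fact assms(2))

lemma port_graph4_port_range:
  assumes "port_graph4 nbr" "nbr u p = Some v"
  shows "p \<in> {1, 2, 3, 4}"
proof -
  obtain d where d: "d \<le> 4" "\<And>q. nbr u q \<noteq> None \<longleftrightarrow> 1 \<le> q \<and> q \<le> d"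
    using assms(1) unfolding port_graph4_def by blast
  then have "1 \<le> p" "p \<le> d"
    using assms(2) d(2)[of p] by auto
  with d(1) show ?thesis
    by auto
qed

lemma pebbles_nth:
  assumes "distinct P" "Suc i < length P"
  shows "pebbles nbr P (P ! i) = Some (psi (port_to nbr (P ! i) (P ! Suc i)))"
proof -
  have "(THE j. Suc j < length P \<and> P ! j = P ! i) = i"
    by (rule the_equality) (use assms in \<open>auto simp: nth_eq_iff_index_eq\<close>)
  then show ?thesis
    using assms by (auto simp: pebbles_def)
qed

lemma one_minus_add_le_mult:
  fixes p q a b :: real
  assumes "0 \<le> p" "0 \<le> q" "0 \<le> a" "0 \<le> b" "1 - a \<le> p" "1 - b \<le> q"
  shows "1 - (a + b) \<le> p * q"
proof (cases "a \<le> 1")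
  case True
  have "1 - (a + b) \<le> (1 - a) * (1 - b)"
    using assms by (simp add: algebra_simps)
  also have "\<dots> \<le> (1 - a) * q"
    using True assms by (intro mult_left_mono) auto
  also have "\<dots> \<le> p * q"
    using assms by (intro mult_right_mono) auto
  finally show ?thesis .
next
  case False
  then show ?thesis
    using assms mult_nonneg_nonneg[of p q] by linarith
qed

lemma pmf_bind_ge_mult: "pmf A a * pmf (f a) x \<le> pmf (bind_pmf A f) x"
proof -
  have "pmf A a * pmf (f a) x = (\<integral>y. pmf (f y) x * indicator {a} y \<partial>measure_pmf A)"
    by (subst integral_measure_pmf_real[where A = "{a}"]) (auto simp: indicator_def)
  also have "\<dots> \<le> (\<integral>y. pmf (f y) x \<partial>measure_pmf A)"
    by (intro integral_mono measure_pmf.integrable_const_bound[where B = 1])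
       (auto simp: pmf_le_1 indicator_def)
  finally show ?thesis
    by (simp add: pmf_bind)
qed

lemma pmf_agent_run_along:
  assumes "x 0 = s" "0 \<le> e"
    and step: "\<And>i. i < D \<Longrightarrow> 1 - e \<le> pmf (agent_step nbr peb t n (Some (x i))) (Some (x (Suc i)))"
  shows "j \<le> D \<Longrightarrow> 1 - real j * e \<le> pmf (agent_run nbr peb s t n j) (Some (x j))"
proof (induction j)
  case 0
  then show ?case
    using assms(1) by simp
next
  case (Suc j)
  have "1 - (real j * e + e)
      \<le> pmf (agent_run nbr peb s t n j) (Some (x j)) *
         pmf (agent_step nbr peb t n (Some (x j))) (Some (x (Suc j)))"
    using Suc assms(2) step[of j] by (intro one_minus_add_le_mult) simp_all
  also have "\<dots> \<le> pmf (agent_run nbr peb s t n (Suc j)) (Some (x (Suc j)))"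
    by (simp only: agent_run.simps pmf_bind_ge_mult)
  finally show ?case
    by (simp add: algebra_simps)
qed

lemma success_prob_ge:
  assumes "port_graph4 nbr" "shortest_path nbr s t P"
  shows "1 - real (length P - 1) * (2 / 2 ^ n) \<le> success_prob nbr s t P n"
proof -
  define D where "D = length P - 1"
  have dist: "distinct P"
    using assms(2) by (rule shortest_path_distinct)
  have walk: "P \<noteq> []" "hd P = s" "last P = t" "\<And>i. Suc i < length P \<Longrightarrow> adj nbr (P ! i) (P ! Suc i)"
    using assms(2) by (auto simp: shortest_path_def is_walk_def)
  then have ends: "P ! 0 = s" "P ! D = t"
    by (simp_all add: D_def hd_conv_nth last_conv_nth)
  have "1 - 2 / 2 ^ n \<le> pmf (agent_step nbr (pebbles nbr P) t n (Some (P ! i))) (Some (P ! Suc i))"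
    if "i < D" for i
  proof -
    have i: "Suc i < length P"
      using that by (simp add: D_def)
    then obtain p where p: "nbr (P ! i) p = Some (P ! Suc i)"
      using walk(4) by (auto simp: adj_def)
    have "P ! i \<noteq> P ! D"
      using dist i that by (simp add: D_def nth_eq_iff_index_eq)
    with ends have "P ! i \<noteq> t"
      by simp
    then show ?thesis
      using p pebbles_nth[OF dist i] port_to_eq[OF assms(1) p] port_graph4_port_range[OF assms(1) p]
      by (intro pmf_agent_step_ge) simp_all
  qed
  then have "1 - real D * (2 / 2 ^ n) \<le> pmf (agent_run nbr (pebbles nbr P) s t n D) (Some (P ! D))"
    using ends by (intro pmf_agent_run_along[where x = "(!) P" and D = D]) simp_all
  then show ?thesis
    using ends by (simp add: success_prob_def D_def)
qed

lemma union_bound_le_inverse: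
  assumes "2 / ln 2 * ln (real D) \<le> real n"
  shows "real D * (2 / 2 ^ n) \<le> 2 / real D"
proof (cases "D = 0")
  case False
  then have D: "0 < real D"
    by simp
  have "ln (real D ^ 2) \<le> ln (2 ^ n)"
    using assms D by (simp add: ln_realpow field_simps)
  then have "real D ^ 2 \<le> 2 ^ n"
    using D by simp
  then have "2 * real D / 2 ^ n \<le> 2 * real D / real D ^ 2"
    using D by (intro divide_left_mono) auto
  also have "\<dots> = 2 / real D"
    by (simp add: power2_eq_square)
  finally show ?thesis
    by (simp add: ac_simps)
qed simp

theorem lemma4:
  "\<exists>c>0. \<forall>n :: nat \<Rightarrow> nat. (\<forall>D. c * ln (real D) \<le> real (n D)) \<longrightarrow>
     (\<exists>f :: nat \<Rightarrow> real. (f \<longlongrightarrow> 1) at_top \<and>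
        (\<forall>(nbr :: 'v \<Rightarrow> nat \<Rightarrow> 'v option) s t P D.
           port_graph4 nbr \<and> shortest_path nbr s t P \<and> D = length P - 1 \<longrightarrow>
           f D \<le> success_prob nbr s t P (n D)))"
proof (intro exI[of _ "2 / ln 2"] exI[of _ "\<lambda>D. 1 - 2 / real D"] conjI allI impI)
  show "(0 :: real) < 2 / ln 2"
    by simp
  show "((\<lambda>D. 1 - 2 / real D) \<longlongrightarrow> 1) at_top"
    using tendsto_diff[OF tendsto_const lim_const_over_n[of 2]] by simp
  fix n :: "nat \<Rightarrow> nat" and nbr :: "'v \<Rightarrow> nat \<Rightarrow> 'v option" and s t P D
  assume "\<forall>D. 2 / ln 2 * ln (real D) \<le> real (n D)"
    and "port_graph4 nbr \<and> shortest_path nbr s t P \<and> D = length P - 1"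
  then show "1 - 2 / real D \<le> success_prob nbr s t P (n D)"
    using success_prob_ge[of nbr s t P "n D"] union_bound_le_inverse[of D "n D"] by force
qed

end
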